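(* Let $a\neq b$ be letters and $w=a^{n_1}b^{n_2}$ with $n_1,n_2\ge1$. Then every element of $\mathtt{BR}(w)$ is rich.
   Context: For a word $w=w_1\cdots w_n$, $w^R=w_n\cdots w_1$; $w$ is a palindrome if $w=w^R$; a factor of $w$ is a word $u$ with $w=puq$. A word $w$ is rich if the number of distinct nonempty palindromic factors of $w$ equals $|w|$. The block reversal of a nonempty word $w$ is $\mathtt{BR}(w)=\{B_t\cdots B_1 : w=B_1\cdots B_t,\ t\ge1,\ \text{each } B_i \text{ nonempty}\}$. *)

theory Defs
  imports Main
begin

definition is_factor :: "'a list \<Rightarrow> 'a list \<Rightarrow> bool" where
  "is_factor u w \<longleftrightarrow> (\<exists>p q. w = p @ u @ q)"

definition palindrome :: "'a list \<Rightarrow> bool" where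
  "palindrome w \<longleftrightarrow> w = rev w"

definition rich :: "'a list \<Rightarrow> bool" where
  "rich w \<longleftrightarrow> card {u. u \<noteq> [] \<and> is_factor u w \<and> palindrome u} = length w"

definition BR :: "'a list \<Rightarrow> 'a list set" where
  "BR w = {concat (rev Bs) | Bs. Bs \<noteq> [] \<and> concat Bs = w \<and> (\<forall>B\<in>set Bs. B \<noteq> [])}"

end

theory Submission
  imports Defs "HOL-Library.Sublist"
begin

(*
  A word of length n has at most n distinct nonempty palindromic factors: appending a letter
  creates at most one new palindrome, because a new palindromic factor must be a suffix, and a
  shorter palindromic suffix of a palindrome is also a prefix of it and hence occurred before.

  Since at most one block straddles the border between the a's and the b's, every element of
  BR(a^n1 b^n2) has the shape b^k2 a^m2 b^k1 a^m1, which degenerates to b^n2 a^n1 when m2 or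
  k1 vanishes. A word x^i y^j x^k y^l with x ~= y and j, k >= 1 contains the pairwise distinct
  palindromes x^s (s <= max i k), y^s (s <= max j l), x^s y^j x^s (s <= min i k) and
  y^s x^k y^s (s <= min j l): these are i + j + k + l of them, so the upper bound is attained.
*)

definition pal_factors :: "'a list \<Rightarrow> 'a list set" where
  "pal_factors w = {u. u \<noteq> [] \<and> sublist u w \<and> palindrome u}"

lemma is_factor_iff_sublist: "is_factor u w \<longleftrightarrow> sublist u w"
  by (simp add: is_factor_def sublist_def)

lemma rich_iff_card_pal_factors: "rich w \<longleftrightarrow> card (pal_factors w) = length w"
  by (simp add: rich_def pal_factors_def is_factor_iff_sublist)

lemma finite_pal_factors: "finite (pal_factors w)"
proof (rule finite_subset)
  show "pal_factors w \<subseteq> {u. set u \<subseteq> set w \<and> length u \<le> length w}"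
    by (auto simp: pal_factors_def dest: set_mono_sublist sublist_length_le)
  show "finite {u. set u \<subseteq> set w \<and> length u \<le> length w}"
    by (rule finite_lists_length_le) simp
qed

lemma palindrome_strict_suffix_sublist_butlast:
  assumes "palindrome u" "palindrome v" "suffix u v" "u \<noteq> v"
  shows "sublist u (butlast v)"
proof -
  obtain r where "v = r @ u" "r \<noteq> []"
    using assms(3,4) by (auto simp: suffix_def)
  then have "v = u @ rev r"
    using assms(1,2) by (metis palindrome_def rev_append)
  with \<open>r \<noteq> []\<close> have "butlast v = u @ butlast (rev r)"
    by (simp add: butlast_append)
  then show ?thesis by simp
qed

lemma new_pal_factor_unique:
  assumes u: "u \<in> pal_factors (w @ [c]) - pal_factors w"
    and v: "v \<in> pal_factors (w @ [c]) - pal_factors w"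
  shows "u = v"
proof -
  have new_suffix: "suffix x (w @ [c]) \<and> \<not> sublist x w \<and> palindrome x"
    if "x \<in> pal_factors (w @ [c]) - pal_factors w" for x
    using that by (auto simp: pal_factors_def sublist_snoc)
  have eq_if_suffix: "x = y"
    if x: "x \<in> pal_factors (w @ [c]) - pal_factors w"
      and y: "y \<in> pal_factors (w @ [c]) - pal_factors w" and "suffix x y" for x y
  proof (rule ccontr)
    assume "x \<noteq> y"
    with new_suffix[OF x] new_suffix[OF y] \<open>suffix x y\<close> have "sublist x (butlast y)"
      by (simp add: palindrome_strict_suffix_sublist_butlast)
    moreover have "suffix (butlast y) w"
      using new_suffix[OF y] by auto
    ultimately have "sublist x w"
      by (meson suffix_imp_sublist sublist_order.order.trans)
    with new_suffix[OF x] show False by blast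
  qed
  have "suffix u (w @ [c])" "suffix v (w @ [c])"
    using new_suffix u v by blast+
  then consider "suffix u v" | "suffix v u"
    using suffix_same_cases by blast
  then show ?thesis
    using eq_if_suffix[OF u v] eq_if_suffix[OF v u] by cases auto
qed

lemma card_pal_factors_snoc: "card (pal_factors (w @ [c])) \<le> Suc (card (pal_factors w))"
proof -
  let ?N = "pal_factors (w @ [c]) - pal_factors w"
  have "card ?N \<le> 1"
    unfolding One_nat_def card_le_Suc0_iff_eq[OF finite_Diff[OF finite_pal_factors]]
    by (intro ballI new_pal_factor_unique)
  have "card (pal_factors (w @ [c])) \<le> card (pal_factors w \<union> ?N)"
    by (rule card_mono) (auto simp: finite_pal_factors)
  also have "\<dots> \<le> card (pal_factors w) + card ?N"
    by (rule card_Un_le)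
  finally show ?thesis
    using \<open>card ?N \<le> 1\<close> by linarith
qed

lemma card_pal_factors_le_length: "card (pal_factors w) \<le> length w"
proof (induction w rule: rev_induct)
  case Nil
  then show ?case by (simp add: pal_factors_def)
next
  case (snoc c w)
  then show ?case using card_pal_factors_snoc[of w c] by simp
qed

lemma rich_if_pal_factors_subset:
  assumes "S \<subseteq> pal_factors w" "length w \<le> card S"
  shows "rich w"
  using card_mono[OF finite_pal_factors assms(1)] assms(2) card_pal_factors_le_length[of w]
  by (simp add: rich_iff_card_pal_factors)

lemma sublist_replicate_le:
  assumes "s \<le> n" "sublist (replicate n x) w"
  shows "sublist (replicate s x) w"
proof -
  have "sublist (replicate s x) (replicate n x)"
    using assms(1) by (metis le_add_diff_inverse replicate_add sublist_append_rightI)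
  then show ?thesis
    using assms(2) by (rule sublist_order.order.trans)
qed

lemma card_image_length_inj:
  fixes F :: "nat \<Rightarrow> 'a list"
  assumes "\<And>s t. length (F s) = length (F t) \<Longrightarrow> s = t"
  shows "card (F ` {1..n}) = n"
  by (metis assms card_atLeastAtMost card_image diff_Suc_1 inj_onI)

lemma pal_factors_replicate_four_blocks:
  "(\<lambda>s. replicate s x) ` {1..max i k} \<union> (\<lambda>s. replicate s y) ` {1..max j l}
     \<union> (\<lambda>s. replicate s x @ replicate j y @ replicate s x) ` {1..min i k}
     \<union> (\<lambda>s. replicate s y @ replicate k x @ replicate s y) ` {1..min j l}
   \<subseteq> pal_factors (replicate i x @ replicate j y @ replicate k x @ replicate l y)"
  (is "?S1 \<union> ?S2 \<union> ?S3 \<union> ?S4 \<subseteq> pal_factors ?w")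
proof (intro Un_least subsetI)
  fix u assume "u \<in> ?S1"
  then obtain s where s: "1 \<le> s" "s \<le> i \<or> s \<le> k" and u: "u = replicate s x"
    by (auto simp: le_max_iff_disj)
  have "sublist (replicate i x) ?w" "sublist (replicate k x) ?w"
    by (simp, metis append.assoc sublist_appendI)
  with s have "sublist u ?w"
    unfolding u by (metis sublist_replicate_le)
  with s u show "u \<in> pal_factors ?w"
    by (simp add: pal_factors_def palindrome_def)
next
  fix u assume "u \<in> ?S2"
  then obtain s where s: "1 \<le> s" "s \<le> j \<or> s \<le> l" and u: "u = replicate s y"
    by (auto simp: le_max_iff_disj)
  have "sublist (replicate j y) ?w" "sublist (replicate l y) ?w"
    by (metis sublist_appendI, metis append.assoc sublist_append_leftI)
  with s have "sublist u ?w"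
    unfolding u by (metis sublist_replicate_le)
  with s u show "u \<in> pal_factors ?w"
    by (simp add: pal_factors_def palindrome_def)
next
  fix u assume "u \<in> ?S3"
  then obtain s where "1 \<le> s" "s \<le> i" "s \<le> k"
    and u: "u = replicate s x @ replicate j y @ replicate s x" by auto
  then have "?w = replicate (i - s) x @ u @ replicate (k - s) x @ replicate l y"
    by (simp flip: replicate_add)
  then have "sublist u ?w"
    by (metis sublist_appendI)
  with \<open>1 \<le> s\<close> u show "u \<in> pal_factors ?w"
    by (simp add: pal_factors_def palindrome_def)
next
  fix u assume "u \<in> ?S4"
  then obtain s where "1 \<le> s" "s \<le> j" "s \<le> l"
    and u: "u = replicate s y @ replicate k x @ replicate s y" by auto
  then have "?w = (replicate i x @ replicate (j - s) y) @ u @ replicate (l - s) y"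
    by (simp flip: replicate_add)
  then have "sublist u ?w"
    by (metis sublist_appendI)
  with \<open>1 \<le> s\<close> u show "u \<in> pal_factors ?w"
    by (simp add: pal_factors_def palindrome_def)
qed

lemma rich_replicate_four_blocks:
  assumes "x \<noteq> y" "1 \<le> j" "1 \<le> k"
  shows "rich (replicate i x @ replicate j y @ replicate k x @ replicate l y)"
proof (rule rich_if_pal_factors_subset[OF pal_factors_replicate_four_blocks])
  let ?S1 = "(\<lambda>s. replicate s x) ` {1..max i k}"
  let ?S2 = "(\<lambda>s. replicate s y) ` {1..max j l}"
  let ?S3 = "(\<lambda>s. replicate s x @ replicate j y @ replicate s x) ` {1..min i k}"
  let ?S4 = "(\<lambda>s. replicate s y @ replicate k x @ replicate s y) ` {1..min j l}"
  have "\<forall>u\<in>?S1. x \<in> set u \<and> y \<notin> set u" "\<forall>u\<in>?S2. y \<in> set u \<and> x \<notin> set u"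
    "\<forall>u\<in>?S3. x \<in> set u \<and> y \<in> set u \<and> hd u = x"
    "\<forall>u\<in>?S4. x \<in> set u \<and> y \<in> set u \<and> hd u \<noteq> x"
    using assms by auto
  then have "?S1 \<inter> ?S2 = {}" "(?S1 \<union> ?S2) \<inter> ?S3 = {}" "(?S1 \<union> ?S2 \<union> ?S3) \<inter> ?S4 = {}"
    by blast+
  moreover have "card ?S1 = max i k" "card ?S2 = max j l" "card ?S3 = min i k" "card ?S4 = min j l"
    by (rule card_image_length_inj; simp)+
  ultimately have "card (?S1 \<union> ?S2 \<union> ?S3 \<union> ?S4) = max i k + max j l + min i k + min j l"
    by (simp add: card_Un_disjoint)
  then show "length (replicate i x @ replicate j y @ replicate k x @ replicate l y)
      \<le> card (?S1 \<union> ?S2 \<union> ?S3 \<union> ?S4)"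
    by (simp add: max_def min_def)
qed

lemma append_eq_replicateE:
  assumes "u @ v = replicate n x"
  obtains k where "k \<le> n" "u = replicate k x" "v = replicate (n - k) x"
proof (rule that)
  have "\<forall>y \<in> set u \<union> set v. y = x"
    using arg_cong[OF assms, of set] by (auto split: if_splits)
  moreover have "length u + length v = n"
    using arg_cong[OF assms, of length] by simp
  ultimately show "length u \<le> n" "u = replicate (length u) x" "v = replicate (n - length u) x"
    by (auto simp: replicate_length_same)
qed

lemma concat_rev_eq_replicate:
  assumes "concat Cs = replicate n x"
  shows "concat (rev Cs) = replicate n x"
proof (rule replicate_eqI)
  show "length (concat (rev Cs)) = n"
    using arg_cong[OF assms, of length] by (simp add: length_concat rev_map[symmetric])
  show "y = x" if "y \<in> set (concat (rev Cs))" for y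
    using that arg_cong[OF assms, of set] by (auto split: if_splits)
qed

text \<open>Here \<open>u2 @ w1\<close> is the block straddling the cut between \<open>u\<close> and \<open>w\<close>
  (empty if the cut falls between two blocks).\<close>
lemma concat_rev_split:
  "concat Bs = u @ w \<Longrightarrow> \<exists>Cs Ds u2 w1. concat Cs @ u2 = u \<and> w1 @ concat Ds = w
     \<and> concat (rev Bs) = concat (rev Ds) @ u2 @ w1 @ concat (rev Cs)"
proof (induction Bs arbitrary: u)
  case Nil
  then show ?case
    by (intro exI[of _ "[]"]) simp
next
  case (Cons B Bs)
  then have "B @ concat Bs = u @ w"
    by simp
  then consider m where "B @ m = u" "concat Bs = m @ w" | m where "B = u @ m" "m @ concat Bs = w"
    unfolding append_eq_append_conv2 by blast
  then show ?case
  proof cases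
    case (1 m)
    then obtain Cs Ds u2 w1 where "concat Cs @ u2 = m" "w1 @ concat Ds = w"
      "concat (rev Bs) = concat (rev Ds) @ u2 @ w1 @ concat (rev Cs)"
      using Cons.IH by blast
    with 1 show ?thesis
      by (intro exI[of _ "B # Cs"] exI[of _ Ds] exI[of _ u2] exI[of _ w1]) auto
  next
    case (2 m)
    then show ?thesis
      by (intro exI[of _ "[]"] exI[of _ Bs] exI[of _ u] exI[of _ m]) auto
  qed
qed

lemma BR_replicate_two_letters:
  assumes "v \<in> BR (replicate n1 a @ replicate n2 b)"
  obtains m1 m2 k1 k2 where "v = replicate k2 b @ replicate m2 a @ replicate k1 b @ replicate m1 a"
    and "m2 + m1 = n1" and "k2 + k1 = n2"
proof -
  obtain Bs where v: "v = concat (rev Bs)" and Bs: "concat Bs = replicate n1 a @ replicate n2 b"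
    using assms by (auto simp: BR_def)
  obtain Cs Ds u2 w1 where u: "concat Cs @ u2 = replicate n1 a"
    and w: "w1 @ concat Ds = replicate n2 b"
    and v_split: "v = concat (rev Ds) @ u2 @ w1 @ concat (rev Cs)"
    using concat_rev_split[OF Bs] unfolding v by blast
  obtain m1 where m1: "m1 \<le> n1" "concat Cs = replicate m1 a" "u2 = replicate (n1 - m1) a"
    using u by (rule append_eq_replicateE)
  obtain k1 where k1: "k1 \<le> n2" "w1 = replicate k1 b" "concat Ds = replicate (n2 - k1) b"
    using w by (rule append_eq_replicateE)
  show ?thesis
  proof (rule that)
    show "v = replicate (n2 - k1) b @ replicate (n1 - m1) a @ replicate k1 b @ replicate m1 a"
      using v_split m1 k1 by (simp add: concat_rev_eq_replicate)
  qed (use m1 k1 in simp_all)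
qed

theorem mainTheorem6:
  fixes a b :: 'a and n1 n2 :: nat and v :: "'a list"
  assumes "a \<noteq> b" and "n1 \<ge> 1" and "n2 \<ge> 1"
    and "v \<in> BR (replicate n1 a @ replicate n2 b)"
  shows "rich v"
proof -
  obtain m1 m2 k1 k2 where v: "v = replicate k2 b @ replicate m2 a @ replicate k1 b @ replicate m1 a"
    and sums: "m2 + m1 = n1" "k2 + k1 = n2"
    by (rule BR_replicate_two_letters[OF assms(4)])
  show ?thesis
  proof (cases "m2 = 0 \<or> k1 = 0")
    case True
    with v have "v = replicate (k2 + k1) b @ replicate (m2 + m1) a"
      by (auto simp: replicate_add)
    then have "v = replicate n2 b @ replicate n1 a"
      unfolding sums .
    then show ?thesis
      using rich_replicate_four_blocks[of a b n2 n1 0 0] assms(1-3) by simp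
  next
    case False
    then show ?thesis
      using rich_replicate_four_blocks[of b a m2 k1 k2 m1] v assms(1) by simp
  qed
qed

end
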